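(* For all $n\ge 1$, the descent polynomial $X_n(t):=\sum_{\sigma\in\mathcal{X}_{2n}} t^{\mathrm{des}(\sigma)}$ can be expanded as \[ X_n(t)=\sum_{j=0}^{\lfloor n/2\rfloor} \gamma_{n,j}\, t^j(1+t)^{n-2j}, \] where $\gamma_{n,j}$ is the number of primary even-odd-descent permutations in $\mathcal{X}_{2n}$ with $j$ descents. Moreover, setting $\gamma_{0,0}=1$, the generating function of the $\gamma_{n,j}$ has the continued fraction expansion \[ \sum_{n\ge 0}\Big(\sum_{j=0}^{\lfloor n/2\rfloor} \gamma_{n,j} t^j \Big)x^n=\cfrac{1}{1-\mu_0 x-\cfrac{\lambda_1 x^2}{1-\mu_1 x-\cfrac{\lambda_2 x^2}{1-\mu_2 x-\cdots}}}, \] where $\mu_h=(h+1)^2$ for $h\ge 0$ and $\lambda_h=h^2(h+1)^2 t$ for $h\ge 1$.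
   Context: $\mathfrak{S}_n$ is the set of permutations of $[n]=\{1,\dots,n\}$, written $\sigma=\sigma_1\cdots\sigma_n$. A descent of $\sigma$ is an index $i\in[n-1]$ with $\sigma_i>\sigma_{i+1}$; $\sigma_i$ is then a descent top, $\sigma_{i+1}$ a descent bottom, and $(\sigma_i,\sigma_{i+1})$ a descent pair; $\mathrm{des}(\sigma)$ is the number of descents. A descent pair is even-odd if $\sigma_i$ is even and $\sigma_{i+1}$ is odd. $\mathcal{X}_{m}$ is the set of $\sigma\in\mathfrak{S}_m$ all of whose descent pairs are even-odd. A permutation $\sigma\in\mathcal{X}_{2n}$ with descent tops $\{t_1,\dots,t_k\}$ and descent bottoms $\{b_1,\dots,b_k\}$ ($k\ge0$) is a primary even-odd-descent permutation if for all $i,j$: $t_i>b_j$ implies $t_i-b_j\ge 3$. *)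

theory Defs
  imports "HOL-Computational_Algebra.Computational_Algebra"
begin

text \<open>Permutations of [m] = {1..m} in one-line notation, as lists (0-indexed positions).\<close>
definition perms :: "nat \<Rightarrow> nat list set" where
  "perms m = {xs. distinct xs \<and> set xs = {1..m}}"

definition descents :: "nat list \<Rightarrow> nat set" where
  "descents xs = {i. Suc i < length xs \<and> xs ! i > xs ! Suc i}"

definition des :: "nat list \<Rightarrow> nat" where
  "des xs = card (descents xs)"

definition descent_tops :: "nat list \<Rightarrow> nat set" where
  "descent_tops xs = (\<lambda>i. xs ! i) ` descents xs"

definition descent_bottoms :: "nat list \<Rightarrow> nat set" where
  "descent_bottoms xs = (\<lambda>i. xs ! Suc i) ` descents xs"

definition XX :: "nat \<Rightarrow> nat list set" where
  "XX m = {xs \<in> perms m. \<forall>i \<in> descents xs. even (xs ! i) \<and> odd (xs ! Suc i)}"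

definition primary :: "nat list \<Rightarrow> bool" where
  "primary xs \<longleftrightarrow> (\<forall>t \<in> descent_tops xs. \<forall>b \<in> descent_bottoms xs. t > b \<longrightarrow> t - b \<ge> 3)"

definition gamma :: "nat \<Rightarrow> nat \<Rightarrow> nat" where
  "gamma n j = card {xs \<in> XX (2 * n). primary xs \<and> des xs = j}"

definition Xpoly :: "nat \<Rightarrow> int poly" where
  "Xpoly n = (\<Sum>xs \<in> XX (2 * n). monom 1 (des xs))"

definition mu :: "nat \<Rightarrow> real" where
  "mu h = real ((h + 1)^2)"

definition lam :: "real \<Rightarrow> nat \<Rightarrow> real" where
  "lam t h = real (h^2 * (h + 1)^2) * t"

text \<open>Convergents of the J-fraction (t fixed real): jconv t h k is the depth-k truncation
  1/(1 - mu_h x - lam_{h+1} x^2/(1 - mu_{h+1} x - ...)) with the tail beyond depth k replaced by 0.\<close>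
fun jconv :: "real \<Rightarrow> nat \<Rightarrow> nat \<Rightarrow> real fps" where
  "jconv t h 0 = 0"
| "jconv t h (Suc k) =
     inverse (1 - fps_const (mu h) * fps_X - fps_const (lam t (Suc h)) * fps_X ^ 2 * jconv t (Suc h) k)"

end

theory Submission
  imports Defs
begin

text \<open>The permutations in X_{2n} are grown by inserting the letters 1, 2, ..., 2n in increasing
  order into sequences of blocks: an odd letter ends a block or opens a new one, an even letter
  ends a block or glues two neighbouring blocks, creating an even-odd descent. Inserting a pair
  2k + 1, 2k + 2 turns a sequence of h + 1 blocks into sequences of h, h + 1 and h + 2 blocks with
  total weights h (h + 1) t, (h + 1)^2 (1 + t) and (h + 1) (h + 2), where t marks descents; for
  primary permutations the factor 1 + t becomes 1, because opening a block with 2k + 1 and then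
  gluing with 2k + 2 is exactly what creates a top one above a bottom. So X_n(t) and the primary
  descent polynomial are sums over weighted Motzkin paths of length n, and a path with j up steps
  contributes t^j (1 + t)^(n - 2j), resp. t^j. The continued fraction is Flajolet's: the
  generating function F_h of the excursions above height h satisfies
  F_h = 1 / (1 - mu_h x - lambda_(h+1) x^2 F_(h+1)), and the depth-N convergent agrees with F_0 up
  to order 2N.\<close>

fun eo_desc :: "nat list \<Rightarrow> bool" where
  "eo_desc (a # b # r) = ((b < a \<longrightarrow> even a \<and> odd b) \<and> eo_desc (b # r))"
| "eo_desc _ = True"

fun ndes :: "nat list \<Rightarrow> nat" where
  "ndes (a # b # r) = (if b < a then 1 else 0) + ndes (b # r)"
| "ndes _ = 0"

definition adj_pairs :: "nat list \<Rightarrow> (nat \<times> nat) set" where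
  "adj_pairs s = set (zip s (tl s))"

definition tops :: "nat list \<Rightarrow> nat set" where
  "tops s = {a. \<exists>b. (a, b) \<in> adj_pairs s \<and> b < a}"

definition bots :: "nat list \<Rightarrow> nat set" where
  "bots s = {b. \<exists>a. (a, b) \<in> adj_pairs s \<and> b < a}"

lemma adj_pairs_Nil [simp]: "adj_pairs [] = {}"
  by (simp add: adj_pairs_def)

lemma adj_pairs_single [simp]: "adj_pairs [a] = {}"
  by (simp add: adj_pairs_def)

lemma adj_pairs_Cons2 [simp]: "adj_pairs (a # b # r) = insert (a, b) (adj_pairs (b # r))"
  by (simp add: adj_pairs_def)

lemma adj_pairs_append:
  "adj_pairs (xs @ ys) = adj_pairs xs \<union> adj_pairs ys \<union> (if xs \<noteq> [] \<and> ys \<noteq> [] then {(last xs, hd ys)} else {})"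
  by (induction xs rule: induct_list012; cases ys) auto

lemma adj_pairs_nth: "adj_pairs xs = {(xs ! i, xs ! Suc i) | i. Suc i < length xs}"
  by (auto simp: adj_pairs_def set_zip nth_tl)

lemma adj_pairs_in_set: "(a, b) \<in> adj_pairs s \<Longrightarrow> a \<in> set s \<and> b \<in> set s"
  unfolding adj_pairs_def by (metis in_set_zipE list.sel(2) list.set_sel(2))

lemma eo_desc_append:
  "eo_desc (xs @ ys) \<longleftrightarrow> eo_desc xs \<and> eo_desc ys
     \<and> (xs \<noteq> [] \<and> ys \<noteq> [] \<longrightarrow> hd ys < last xs \<longrightarrow> even (last xs) \<and> odd (hd ys))"
  by (induction xs rule: induct_list012; cases ys) auto

lemma ndes_append:
  "ndes (xs @ ys) = ndes xs + ndes ys + (if xs \<noteq> [] \<and> ys \<noteq> [] \<and> hd ys < last xs then 1 else 0)"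
  by (induction xs rule: induct_list012; cases ys) auto

lemma tops_append:
  "tops (xs @ ys) = tops xs \<union> tops ys \<union> (if xs \<noteq> [] \<and> ys \<noteq> [] \<and> hd ys < last xs then {last xs} else {})"
  unfolding tops_def adj_pairs_append by auto

lemma bots_append:
  "bots (xs @ ys) = bots xs \<union> bots ys \<union> (if xs \<noteq> [] \<and> ys \<noteq> [] \<and> hd ys < last xs then {hd ys} else {})"
  unfolding bots_def adj_pairs_append by auto

lemma tops_Nil [simp]: "tops [] = {}" and tops_single [simp]: "tops [a] = {}"
  and bots_Nil [simp]: "bots [] = {}" and bots_single [simp]: "bots [a] = {}"
  by (simp_all add: tops_def bots_def)

lemma tops_subset: "tops s \<subseteq> set s" and bots_subset: "bots s \<subseteq> set s"
  unfolding tops_def bots_def using adj_pairs_in_set by blast+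

lemma last_less: "\<forall>x\<in>set s. x < v \<Longrightarrow> s = [] \<or> last s < v"
  using last_in_set by blast

lemma eo_desc_snoc: "eo_desc s \<Longrightarrow> \<forall>x\<in>set s. x < v \<Longrightarrow> eo_desc (s @ [v])"
  using last_less[of s v] by (auto simp: eo_desc_append)

lemma ndes_snoc: "\<forall>x\<in>set s. x < v \<Longrightarrow> ndes (s @ [v]) = ndes s"
  using last_less[of s v] by (auto simp: ndes_append)

lemma tops_snoc: "\<forall>x\<in>set s. x < v \<Longrightarrow> tops (s @ [v]) = tops s"
  using last_less[of s v] by (auto simp: tops_append)

lemma bots_snoc: "\<forall>x\<in>set s. x < v \<Longrightarrow> bots (s @ [v]) = bots s"
  using last_less[of s v] by (auto simp: bots_append)

lemma eo_desc_merge: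
  assumes "eo_desc s" "eo_desc t" "\<forall>x\<in>set s. x < v" "t \<noteq> []" "hd t < v" "odd (hd t)" "even v"
  shows "eo_desc (s @ v # t)"
  using assms last_less[OF assms(3)] eo_desc_append[of s "v # t"] eo_desc_append[of "[v]" t] by auto

lemma ndes_merge:
  assumes "\<forall>x\<in>set s. x < v" "t \<noteq> []" "hd t < v"
  shows "ndes (s @ v # t) = ndes s + 1 + ndes t"
  using assms last_less[OF assms(1)] ndes_append[of s "v # t"] ndes_append[of "[v]" t] by auto

lemma tops_merge:
  assumes "\<forall>x\<in>set s. x < v" "t \<noteq> []" "hd t < v"
  shows "tops (s @ v # t) = tops s \<union> {v} \<union> tops t"
  using assms last_less[OF assms(1)] tops_append[of s "v # t"] tops_append[of "[v]" t]
  by (cases "s = []") (auto simp: less_not_sym)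

lemma bots_merge:
  assumes "\<forall>x\<in>set s. x < v" "t \<noteq> []" "hd t < v"
  shows "bots (s @ v # t) = bots s \<union> {hd t} \<union> bots t"
  using assms last_less[OF assms(1)] bots_append[of s "v # t"] bots_append[of "[v]" t]
  by (cases "s = []") (auto simp: less_not_sym)

lemma eo_desc_split: "eo_desc (a @ v # t) \<Longrightarrow> eo_desc a \<and> eo_desc t \<and> eo_desc (v # t)"
  using eo_desc_append[of a "v # t"] eo_desc_append[of "[v]" t] by auto

lemma eo_desc_split_hd_odd: "eo_desc (a @ v # t) \<Longrightarrow> t \<noteq> [] \<Longrightarrow> hd t < v \<Longrightarrow> odd (hd t)"
  using eo_desc_split[of a v t] eo_desc_append[of "[v]" t] by auto

lemma eo_desc_butlast: "eo_desc s \<Longrightarrow> eo_desc (butlast s)"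
  by (metis append_butlast_last_id butlast.simps(1) eo_desc_append)

lemma last_eq_odd_Max:
  "eo_desc s \<Longrightarrow> distinct s \<Longrightarrow> v \<in> set s \<Longrightarrow> \<forall>x\<in>set s. x \<le> v \<Longrightarrow> odd v \<Longrightarrow> last s = v"
proof (induction s rule: induct_list012)
  case (3 x y zs)
  show ?case
  proof (cases "x = v")
    case True
    then have "y < v" using 3 by (metis distinct_length_2_or_more le_neq_implies_less list.set_intros(1,2))
    then show ?thesis using 3 True by auto
  next
    case False then show ?thesis using 3 by auto
  qed
qed simp_all

lemma descents_Cons2: "descents (a # b # r) = (if b < a then {0} else {}) \<union> Suc ` descents (b # r)"
proof (rule set_eqI)
  show "i \<in> descents (a # b # r) \<longleftrightarrow> i \<in> (if b < a then {0} else {}) \<union> Suc ` descents (b # r)" for i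
    by (cases i) (auto simp: descents_def)
qed

lemma descents_short: "length xs < 2 \<Longrightarrow> descents xs = {}"
  unfolding descents_def by auto

lemma finite_descents: "finite (descents xs)"
  unfolding descents_def by (rule finite_subset[of _ "{..<length xs}"]) auto

lemma des_eq_ndes: "des xs = ndes xs"
proof (induction xs rule: induct_list012)
  case (3 x y zs)
  have "card (descents (x # y # zs)) = (if y < x then 1 else 0) + card (descents (y # zs))"
    unfolding descents_Cons2 using finite_descents[of "y # zs"]
    by (subst card_Un_disjoint) (auto simp: card_image)
  then show ?case using 3 by (simp add: des_def)
qed (simp_all add: des_def descents_short)

lemma eo_desc_iff: "eo_desc xs \<longleftrightarrow> (\<forall>i\<in>descents xs. even (xs ! i) \<and> odd (xs ! Suc i))"
  by (induction xs rule: induct_list012) (auto simp: descents_short descents_Cons2)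

lemma tops_eq_descent_tops: "tops xs = descent_tops xs"
  unfolding tops_def descent_tops_def descents_def adj_pairs_nth by auto

lemma bots_eq_descent_bottoms: "bots xs = descent_bottoms xs"
  unfolding bots_def descent_bottoms_def descents_def adj_pairs_nth by auto

subsection \<open>Arrangements\<close>

text \<open>The arrangements of [m] with a single block are the
  permutations in X_m; the number of further blocks is the height of a Motzkin path.\<close>

definition heads_odd :: "nat list list \<Rightarrow> bool" where
  "heads_odd Q \<longleftrightarrow> (\<forall>s\<in>set Q. s \<noteq> [] \<and> odd (hd s))"

definition eo_arr :: "nat \<Rightarrow> nat list list \<Rightarrow> bool" where
  "eo_arr m Q \<longleftrightarrow> Q \<noteq> [] \<and> distinct (concat Q) \<and> set (concat Q) = {1..m}
      \<and> (\<forall>s\<in>set Q. eo_desc s) \<and> heads_odd (tl Q)"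

definition eo_arrs :: "nat \<Rightarrow> nat list list set" where
  "eo_arrs m = {Q. eo_arr m Q}"

definition des_arr :: "nat list list \<Rightarrow> nat" where
  "des_arr Q = sum_list (map ndes Q)"

definition arr_tops :: "nat list list \<Rightarrow> nat set" where
  "arr_tops Q = \<Union> (tops ` set Q)"

text \<open>The head of every block but the first counts as a bottom: it becomes a descent bottom once
  the blocks are glued together.\<close>

fun arr_bots :: "nat list list \<Rightarrow> nat set" where
  "arr_bots [] = {}"
| "arr_bots [s] = bots s"
| "arr_bots (s # t # Q) = bots s \<union> {hd t} \<union> arr_bots (t # Q)"

definition primary_arr :: "nat list list \<Rightarrow> bool" where
  "primary_arr Q \<longleftrightarrow> (\<forall>b\<in>arr_bots Q. Suc b \<notin> arr_tops Q)"

lemma heads_odd_Nil [simp]: "heads_odd []"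
  by (simp add: heads_odd_def)

lemma heads_odd_Cons [simp]: "heads_odd (s # Q) \<longleftrightarrow> s \<noteq> [] \<and> odd (hd s) \<and> heads_odd Q"
  by (simp add: heads_odd_def)

lemma arr_bots_Cons: "arr_bots (s # Q) = bots s \<union> arr_bots Q \<union> (if Q = [] then {} else {hd (hd Q)})"
  by (cases Q) auto

lemma arr_tops_Nil [simp]: "arr_tops [] = {}"
  and arr_tops_Cons [simp]: "arr_tops (s # Q) = tops s \<union> arr_tops Q"
  by (simp_all add: arr_tops_def)

lemma arr_tops_subset: "arr_tops Q \<subseteq> set (concat Q)"
  unfolding arr_tops_def using tops_subset by auto

lemma arr_bots_subset: "heads_odd (tl Q) \<Longrightarrow> arr_bots Q \<subseteq> set (concat Q)"
proof (induction Q)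
  case (Cons s Q)
  then have "heads_odd (tl Q)" by (cases Q) auto
  then show ?case using Cons bots_subset[of s] by (cases Q) (auto simp: arr_bots_Cons)
qed simp

lemma eo_arr_less_Suc: "eo_arr m Q \<Longrightarrow> \<forall>x\<in>set (concat Q). x < Suc m"
  unfolding eo_arr_def by auto

lemma perm_insert_Suc_iff:
  "distinct (xs @ Suc m # ys) \<and> set (xs @ Suc m # ys) = {1..Suc m}
     \<longleftrightarrow> distinct (xs @ ys) \<and> set (xs @ ys) = {1..m}"
proof
  assume a: "distinct (xs @ Suc m # ys) \<and> set (xs @ Suc m # ys) = {1..Suc m}"
  then have "set (xs @ ys) = {1..Suc m} - {Suc m}" by auto
  then show "distinct (xs @ ys) \<and> set (xs @ ys) = {1..m}" using a by auto
next
  assume a: "distinct (xs @ ys) \<and> set (xs @ ys) = {1..m}"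
  then have "Suc m \<notin> set (xs @ ys)" by auto
  then show "distinct (xs @ Suc m # ys) \<and> set (xs @ Suc m # ys) = {1..Suc m}"
    using a by (auto simp: atLeastAtMostSuc_conv)
qed

subsection \<open>Inserting the next letter\<close>

fun ins_odd :: "nat \<Rightarrow> nat list list \<Rightarrow> nat \<times> bool \<Rightarrow> nat list list" where
  "ins_odd v [] c = []"
| "ins_odd v (s # Q) (0, False) = (s @ [v]) # Q"
| "ins_odd v (s # Q) (0, True) = s # [v] # Q"
| "ins_odd v (s # Q) (Suc i, b) = s # ins_odd v Q (i, b)"

fun ins_even :: "nat \<Rightarrow> nat list list \<Rightarrow> nat \<times> bool \<Rightarrow> nat list list" where
  "ins_even v [] c = []"
| "ins_even v (s # Q) (0, False) = (s @ [v]) # Q"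
| "ins_even v [s] (0, True) = [s]"
| "ins_even v (s # t # Q) (0, True) = (s @ v # t) # Q"
| "ins_even v (s # Q) (Suc i, b) = s # ins_even v Q (i, b)"

definition odd_slots :: "nat list list \<Rightarrow> (nat \<times> bool) set" where
  "odd_slots Q = {(i, b). i < length Q}"

definition even_slots :: "nat list list \<Rightarrow> (nat \<times> bool) set" where
  "even_slots Q = {(i, c). i < length Q \<and> (c \<longrightarrow> Suc i < length Q)}"

lemma mem_odd_slots [simp]: "(i, b) \<in> odd_slots Q \<longleftrightarrow> i < length Q"
  by (simp add: odd_slots_def)

lemma mem_even_slots [simp]: "(i, c) \<in> even_slots Q \<longleftrightarrow> i < length Q \<and> (c \<longrightarrow> Suc i < length Q)"
  by (simp add: even_slots_def)

lemma finite_odd_slots: "finite (odd_slots Q)"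
  by (rule finite_subset[of _ "{..<length Q} \<times> UNIV"]) (auto simp: odd_slots_def)

lemma finite_even_slots: "finite (even_slots Q)"
  by (rule finite_subset[of _ "{..<length Q} \<times> UNIV"]) (auto simp: even_slots_def)

lemma sum_odd_slots: "(\<Sum>p\<in>odd_slots Q. f (snd p)) = of_nat (length Q) * (f False + f True)"
proof -
  have "odd_slots Q = (\<lambda>i. (i, False)) ` {..<length Q} \<union> (\<lambda>i. (i, True)) ` {..<length Q}"
    by (auto simp: odd_slots_def)
  then show ?thesis
    by (simp only:) (subst sum.union_disjoint; auto simp: sum.reindex inj_on_def distrib_left)
qed

lemma sum_even_slots:
  "(\<Sum>p\<in>even_slots Q. f (snd p)) = of_nat (length Q) * f False + of_nat (length Q - 1) * f True"
proof -
  have "even_slots Q = (\<lambda>i. (i, False)) ` {..<length Q} \<union> (\<lambda>i. (i, True)) ` {..<length Q - 1}"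
    by (auto simp: even_slots_def)
  then show ?thesis
    by (simp only:) (subst sum.union_disjoint; auto simp: sum.reindex inj_on_def)
qed

lemma ins_odd_split: "(i, b) \<in> odd_slots Q \<Longrightarrow> \<exists>xs ys. concat Q = xs @ ys \<and> concat (ins_odd v Q (i, b)) = xs @ v # ys"
proof (induction v Q "(i, b)" arbitrary: i rule: ins_odd.induct)
  case (4 v s Q i)
  then obtain xs ys where "concat Q = xs @ ys" "concat (ins_odd v Q (i, b)) = xs @ v # ys" by auto
  then show ?case by (intro exI[of _ "s @ xs"] exI[of _ ys]) auto
qed auto

lemma ins_even_split: "(i, c) \<in> even_slots Q \<Longrightarrow> \<exists>xs ys. concat Q = xs @ ys \<and> concat (ins_even v Q (i, c)) = xs @ v # ys"
proof (induction v Q "(i, c)" arbitrary: i rule: ins_even.induct)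
  case (5 v s Q i)
  then obtain xs ys where "concat Q = xs @ ys" "concat (ins_even v Q (i, c)) = xs @ v # ys" by auto
  then show ?case by (intro exI[of _ "s @ xs"] exI[of _ ys]) auto
qed auto

lemma length_ins_odd: "(i, b) \<in> odd_slots Q \<Longrightarrow> length (ins_odd v Q (i, b)) = length Q + (if b then 1 else 0)"
  by (induction v Q "(i, b)" arbitrary: i rule: ins_odd.induct) auto

lemma length_ins_even: "(i, c) \<in> even_slots Q \<Longrightarrow> length (ins_even v Q (i, c)) = length Q - (if c then 1 else 0)"
  by (induction v Q "(i, c)" arbitrary: i rule: ins_even.induct) (auto split: if_splits)

lemma eo_desc_ins_odd:
  "\<forall>s\<in>set Q. eo_desc s \<Longrightarrow> \<forall>x\<in>set (concat Q). x < v \<Longrightarrow> \<forall>s\<in>set (ins_odd v Q (i, b)). eo_desc s"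
  by (induction v Q "(i, b)" arbitrary: i rule: ins_odd.induct) (auto intro: eo_desc_snoc)

lemma eo_desc_ins_even:
  "\<forall>s\<in>set Q. eo_desc s \<Longrightarrow> \<forall>x\<in>set (concat Q). x < v \<Longrightarrow> heads_odd (tl Q) \<Longrightarrow> even v
   \<Longrightarrow> \<forall>s\<in>set (ins_even v Q (i, c)). eo_desc s"
proof (induction v Q "(i, c)" arbitrary: i rule: ins_even.induct)
  case (4 v s t Q)
  then show ?case by (auto intro!: eo_desc_merge)
next
  case (5 v s Q i)
  then show ?case by (cases Q) auto
qed (auto intro: eo_desc_snoc)

lemma heads_odd_ins_odd: "heads_odd Q \<Longrightarrow> odd v \<Longrightarrow> heads_odd (ins_odd v Q (i, b))"
  by (induction v Q "(i, b)" arbitrary: i rule: ins_odd.induct) auto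

lemma heads_odd_tl_ins_odd: "heads_odd (tl Q) \<Longrightarrow> odd v \<Longrightarrow> heads_odd (tl (ins_odd v Q (i, b)))"
  by (cases "(v, Q, (i, b))" rule: ins_odd.cases) (auto simp: heads_odd_ins_odd)

lemma heads_odd_ins_even: "heads_odd Q \<Longrightarrow> heads_odd (ins_even v Q (i, c))"
  by (induction v Q "(i, c)" arbitrary: i rule: ins_even.induct) auto

lemma heads_odd_tl_ins_even: "heads_odd (tl Q) \<Longrightarrow> heads_odd (tl (ins_even v Q (i, c)))"
  by (cases "(v, Q, (i, c))" rule: ins_even.cases) (auto simp: heads_odd_ins_even)

lemma des_arr_ins_odd: "\<forall>x\<in>set (concat Q). x < v \<Longrightarrow> des_arr (ins_odd v Q (i, b)) = des_arr Q"
  by (induction v Q "(i, b)" arbitrary: i rule: ins_odd.induct) (auto simp: des_arr_def ndes_snoc)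

lemma des_arr_ins_even:
  "\<forall>x\<in>set (concat Q). x < v \<Longrightarrow> heads_odd (tl Q) \<Longrightarrow> (i, c) \<in> even_slots Q
   \<Longrightarrow> des_arr (ins_even v Q (i, c)) = des_arr Q + (if c then 1 else 0)"
proof (induction v Q "(i, c)" arbitrary: i rule: ins_even.induct)
  case (5 v s Q i)
  then show ?case by (cases Q) (auto simp: des_arr_def)
qed (auto simp: des_arr_def ndes_snoc ndes_merge)

lemma ins_odd_not_Nil: "(i, b) \<in> odd_slots Q \<Longrightarrow> ins_odd v Q (i, b) \<noteq> []"
  by (cases "(v, Q, (i, b))" rule: ins_odd.cases) auto

lemma ins_even_not_Nil: "(i, c) \<in> even_slots Q \<Longrightarrow> ins_even v Q (i, c) \<noteq> []"
  by (cases "(v, Q, (i, c))" rule: ins_even.cases) auto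

lemma hd_hd_ins_odd: "Q \<noteq> [] \<Longrightarrow> hd Q \<noteq> [] \<Longrightarrow> hd (hd (ins_odd v Q (i, b))) = hd (hd Q)"
  by (cases "(v, Q, (i, b))" rule: ins_odd.cases) auto

lemma hd_hd_ins_even: "Q \<noteq> [] \<Longrightarrow> hd Q \<noteq> [] \<Longrightarrow> hd (hd (ins_even v Q (i, c))) = hd (hd Q)"
  by (cases "(v, Q, (i, c))" rule: ins_even.cases) auto

lemma arr_tops_ins_odd: "\<forall>x\<in>set (concat Q). x < v \<Longrightarrow> arr_tops (ins_odd v Q (i, b)) = arr_tops Q"
  by (induction v Q "(i, b)" arbitrary: i rule: ins_odd.induct) (auto simp: tops_snoc)

lemma arr_bots_ins_odd:
  "\<forall>x\<in>set (concat Q). x < v \<Longrightarrow> heads_odd (tl Q) \<Longrightarrow> (i, b) \<in> odd_slots Q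
   \<Longrightarrow> arr_bots (ins_odd v Q (i, b)) = arr_bots Q \<union> (if b then {v} else {})"
proof (induction v Q "(i, b)" arbitrary: i rule: ins_odd.induct)
  case (4 v s Q i)
  then have "Q \<noteq> []" "hd Q \<noteq> []" "heads_odd (tl Q)" by (cases Q; auto)+
  then show ?case using 4 hd_hd_ins_odd[of Q v i b] ins_odd_not_Nil[of i b Q v]
    by (auto simp: arr_bots_Cons)
qed (auto simp: arr_bots_Cons bots_snoc)

lemma arr_tops_ins_even:
  "\<forall>x\<in>set (concat Q). x < v \<Longrightarrow> heads_odd (tl Q) \<Longrightarrow> (i, c) \<in> even_slots Q
   \<Longrightarrow> arr_tops (ins_even v Q (i, c)) = arr_tops Q \<union> (if c then {v} else {})"
proof (induction v Q "(i, c)" arbitrary: i rule: ins_even.induct)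
  case (4 v s t Q)
  then show ?case by (auto simp: tops_merge)
next
  case (5 v s Q i)
  then show ?case by (cases Q) auto
qed (auto simp: tops_snoc)

lemma arr_bots_ins_even:
  "\<forall>x\<in>set (concat Q). x < v \<Longrightarrow> heads_odd (tl Q) \<Longrightarrow> (i, c) \<in> even_slots Q
   \<Longrightarrow> arr_bots (ins_even v Q (i, c)) = arr_bots Q"
proof (induction v Q "(i, c)" arbitrary: i rule: ins_even.induct)
  case (4 v s t Q)
  then show ?case by (auto simp: bots_merge arr_bots_Cons)
next
  case (5 v s Q i)
  then have "Q \<noteq> []" "hd Q \<noteq> []" "heads_odd (tl Q)" by (cases Q; auto)+
  then show ?case using 5 hd_hd_ins_even[of Q v i c] ins_even_not_Nil[of i c Q v]
    by (auto simp: arr_bots_Cons)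
qed (auto simp: arr_bots_Cons bots_snoc)

lemma primary_arr_ins_odd:
  assumes "\<forall>x\<in>set (concat Q). x < v" "heads_odd (tl Q)" "(i, b) \<in> odd_slots Q"
  shows "primary_arr (ins_odd v Q (i, b)) = primary_arr Q"
proof -
  have "Suc v \<notin> arr_tops Q" using arr_tops_subset[of Q] assms(1) by fastforce
  then show ?thesis
    unfolding primary_arr_def using arr_bots_ins_odd[OF assms] arr_tops_ins_odd[OF assms(1)] by auto
qed

text \<open>Gluing with the even letter v makes v a top, which is forbidden exactly when v - 1 is
  already a bottom.\<close>

lemma primary_arr_ins_even:
  assumes "\<forall>x\<in>set (concat Q). x < v" "heads_odd (tl Q)" "(i, c) \<in> even_slots Q" "0 < v"
  shows "primary_arr (ins_even v Q (i, c)) = (primary_arr Q \<and> \<not> (c \<and> v - 1 \<in> arr_bots Q))"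
proof -
  have "v \<notin> arr_tops Q" using arr_tops_subset[of Q] assms(1) by fastforce
  moreover have "Suc b = v \<longleftrightarrow> b = v - 1" for b using assms(4) by auto
  ultimately show ?thesis
    unfolding primary_arr_def using arr_bots_ins_even[OF assms(1-3)] arr_tops_ins_even[OF assms(1-3)]
    by auto
qed

lemma eo_arr_ins_odd:
  assumes "eo_arr m Q" "(i, b) \<in> odd_slots Q" "odd (Suc m)"
  shows "eo_arr (Suc m) (ins_odd (Suc m) Q (i, b))"
proof -
  obtain xs ys where "concat Q = xs @ ys" "concat (ins_odd (Suc m) Q (i, b)) = xs @ Suc m # ys"
    using ins_odd_split[OF assms(2)] by blast
  moreover have "\<forall>s\<in>set (ins_odd (Suc m) Q (i, b)). eo_desc s"
    using eo_desc_ins_odd[OF _ eo_arr_less_Suc[OF assms(1)]] assms(1) by (auto simp: eo_arr_def)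
  ultimately show ?thesis
    using assms ins_odd_not_Nil[OF assms(2)] perm_insert_Suc_iff[of xs m ys] heads_odd_tl_ins_odd
    unfolding eo_arr_def by auto
qed

lemma eo_arr_ins_even:
  assumes "eo_arr m Q" "(i, c) \<in> even_slots Q" "even (Suc m)"
  shows "eo_arr (Suc m) (ins_even (Suc m) Q (i, c))"
proof -
  obtain xs ys where "concat Q = xs @ ys" "concat (ins_even (Suc m) Q (i, c)) = xs @ Suc m # ys"
    using ins_even_split[OF assms(2)] by blast
  moreover have "\<forall>s\<in>set (ins_even (Suc m) Q (i, c)). eo_desc s"
    using eo_desc_ins_even[OF _ eo_arr_less_Suc[OF assms(1)] _ assms(3)] assms(1) by (auto simp: eo_arr_def)
  ultimately show ?thesis
    using assms ins_even_not_Nil[OF assms(2)] perm_insert_Suc_iff[of xs m ys] heads_odd_tl_ins_even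
    unfolding eo_arr_def by auto
qed

subsection \<open>Deleting the largest letter\<close>

text \<open>In a block after the first, a singleton [v] was opened by v and disappears with it.\<close>

fun del_odd_tl :: "nat \<Rightarrow> nat list list \<Rightarrow> nat list list" where
  "del_odd_tl v [] = []"
| "del_odd_tl v (s # Q) = (if s = [v] then Q else removeAll v s # del_odd_tl v Q)"

fun del_odd :: "nat \<Rightarrow> nat list list \<Rightarrow> nat list list" where
  "del_odd v [] = []"
| "del_odd v (s # Q) = removeAll v s # del_odd_tl v Q"

fun odd_slot_tl :: "nat \<Rightarrow> nat list list \<Rightarrow> nat \<times> bool" where
  "odd_slot_tl v [] = (0, False)"
| "odd_slot_tl v (s # Q) = (if s = [v] then (0, True) else if v \<in> set s then (1, False)
      else (case odd_slot_tl v Q of (i, b) \<Rightarrow> (Suc i, b)))"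

fun odd_slot :: "nat \<Rightarrow> nat list list \<Rightarrow> nat \<times> bool" where
  "odd_slot v [] = (0, False)"
| "odd_slot v (s # Q) = (if v \<in> set s then (0, False) else odd_slot_tl v Q)"

lemma del_odd_tl_id: "v \<notin> set (concat Q) \<Longrightarrow> del_odd_tl v Q = Q"
  by (induction Q) auto

lemma del_odd_tl_ins_odd:
  "heads_odd Q \<Longrightarrow> v \<notin> set (concat Q) \<Longrightarrow> i < length Q \<Longrightarrow>
   del_odd_tl v (ins_odd v Q (i, b)) = Q \<and> odd_slot_tl v (ins_odd v Q (i, b)) = (Suc i, b)"
  by (induction v Q "(i, b)" arbitrary: i rule: ins_odd.induct) (auto simp: del_odd_tl_id)

lemma del_odd_ins_odd:
  "heads_odd (tl Q) \<Longrightarrow> v \<notin> set (concat Q) \<Longrightarrow> (i, b) \<in> odd_slots Q \<Longrightarrow>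
   del_odd v (ins_odd v Q (i, b)) = Q \<and> odd_slot v (ins_odd v Q (i, b)) = (i, b)"
  by (cases "(v, Q, (i, b))" rule: ins_odd.cases) (auto simp: del_odd_tl_id del_odd_tl_ins_odd)

lemma removeAll_last: "distinct s \<Longrightarrow> s \<noteq> [] \<Longrightarrow> last s = v \<Longrightarrow> removeAll v s = butlast s"
proof -
  assume a: "distinct s" "s \<noteq> []" "last s = v"
  then have e: "s = butlast s @ [v]" by (metis append_butlast_last_id)
  then have "v \<notin> set (butlast s)" using a(1) by (metis distinct_append not_distinct_conv_prefix)
  then show ?thesis by (subst e) simp
qed

lemma ins_odd_del_odd_tl:
  "v \<in> set (concat Q) \<Longrightarrow> distinct (concat Q) \<Longrightarrow> \<forall>s\<in>set Q. v \<in> set s \<longrightarrow> last s = v \<Longrightarrow>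
   ins_odd v (p # del_odd_tl v Q) (odd_slot_tl v Q) = p # Q \<and> fst (odd_slot_tl v Q) \<le> length (del_odd_tl v Q)"
proof (induction Q arbitrary: p)
  case (Cons s Q)
  consider "s = [v]" | "s \<noteq> [v]" "v \<in> set s" | "v \<notin> set s" by blast
  then show ?case
  proof cases
    case 2
    then have "s \<noteq> []" "last s = v" "distinct s" "v \<notin> set (concat Q)" using Cons.prems by auto
    then have "v \<notin> set (concat Q)" "s = butlast s @ [v]" "removeAll v s = butlast s"
      by (auto simp: removeAll_last)
    then show ?thesis using 2 by (simp add: del_odd_tl_id)
  next
    case 3
    then show ?thesis using Cons by (auto split: prod.splits)
  qed simp
qed simp

lemma ins_odd_del_odd:
  assumes "v \<in> set (concat T)" "distinct (concat T)" "\<forall>s\<in>set T. v \<in> set s \<longrightarrow> last s = v"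
  shows "ins_odd v (del_odd v T) (odd_slot v T) = T \<and> odd_slot v T \<in> odd_slots (del_odd v T)"
proof (cases T)
  case (Cons s Q)
  show ?thesis
  proof (cases "v \<in> set s")
    case True
    then have "s \<noteq> []" "last s = v" "distinct s" "v \<notin> set (concat Q)" using assms Cons by auto
    then have "v \<notin> set (concat Q)" "s = butlast s @ [v]" "removeAll v s = butlast s"
      by (auto simp: removeAll_last)
    then show ?thesis using True Cons by (simp add: del_odd_tl_id)
  next
    case False
    then show ?thesis using ins_odd_del_odd_tl[of v Q s] assms Cons by (auto simp: odd_slots_def)
  qed
qed (use assms in simp)

lemma hd_butlast: "butlast s \<noteq> [] \<Longrightarrow> hd (butlast s) = hd s"
  by (metis append_butlast_last_id butlast.simps(1) hd_append2)

lemma set_del_odd_tl: "set (del_odd_tl v Q) \<subseteq> removeAll v ` set Q \<union> set Q"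
  by (induction Q) auto

lemma set_del_odd: "set (del_odd v T) \<subseteq> removeAll v ` set T \<union> set T"
  by (cases T) (use set_del_odd_tl in auto)

lemma eo_desc_del_odd:
  assumes "\<forall>s\<in>set T. eo_desc s" "\<forall>s\<in>set T. v \<in> set s \<longrightarrow> last s = v \<and> distinct s"
  shows "\<forall>s\<in>set (del_odd v T). eo_desc s"
proof
  fix s' assume "s' \<in> set (del_odd v T)"
  then consider "s' \<in> set T" | s where "s \<in> set T" "s' = removeAll v s" using set_del_odd by blast
  then show "eo_desc s'"
  proof cases
    case 2
    show ?thesis
    proof (cases "v \<in> set s")
      case True
      then have "s \<noteq> []" "last s = v" "distinct s" using 2 assms(2) by auto
      then show ?thesis using 2 assms(1) removeAll_last[of s v] eo_desc_butlast[of s] by simp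
    qed (use 2 assms in auto)
  qed (use assms in auto)
qed

lemma heads_odd_del_odd_tl:
  "heads_odd Q \<Longrightarrow> \<forall>s\<in>set Q. v \<in> set s \<longrightarrow> last s = v \<and> distinct s \<Longrightarrow> heads_odd (del_odd_tl v Q)"
proof (induction Q)
  case (Cons s Q)
  then have ih: "heads_odd (del_odd_tl v Q)" and s: "s \<noteq> []" "odd (hd s)" by auto
  show ?case
  proof (cases "s \<noteq> [v] \<and> v \<in> set s")
    case True
    then have "last s = v" "removeAll v s = butlast s" using Cons.prems s removeAll_last[of s v] by auto
    moreover have "butlast s \<noteq> []" using True s \<open>last s = v\<close> by (metis append_butlast_last_id append_Nil)
    ultimately show ?thesis using True ih s hd_butlast[of s] by auto
  qed (use Cons in auto)
qed simp

text \<open>An odd letter larger than all others cannot be a descent top, so it ends its block.\<close>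

lemma eo_arr_odd_max_last:
  assumes "eo_arr (Suc m) T" "odd (Suc m)"
  shows "\<forall>s\<in>set T. Suc m \<in> set s \<longrightarrow> last s = Suc m \<and> distinct s"
proof (intro ballI impI)
  fix s assume s: "s \<in> set T" "Suc m \<in> set s"
  then have "distinct s" "eo_desc s" "\<forall>x\<in>set s. x \<le> Suc m"
    using assms(1) by (auto simp: eo_arr_def distinct_concat_iff)
  then show "last s = Suc m \<and> distinct s" using last_eq_odd_Max[of s "Suc m"] s assms(2) by auto
qed

lemma eo_arr_del_odd:
  assumes "eo_arr (Suc m) T" "odd (Suc m)"
  shows "eo_arr m (del_odd (Suc m) T) \<and> odd_slot (Suc m) T \<in> odd_slots (del_odd (Suc m) T)
     \<and> ins_odd (Suc m) (del_odd (Suc m) T) (odd_slot (Suc m) T) = T"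
proof -
  let ?v = "Suc m" and ?Q = "del_odd (Suc m) T"
  note ends = eo_arr_odd_max_last[OF assms]
  obtain i b where slot: "odd_slot ?v T = (i, b)" by fastforce
  have T: "?v \<in> set (concat T)" "distinct (concat T)" "T \<noteq> []" using assms(1) by (auto simp: eo_arr_def)
  then have ins: "ins_odd ?v ?Q (i, b) = T" "(i, b) \<in> odd_slots ?Q"
    using ins_odd_del_odd[OF T(1,2)] ends slot by auto
  then obtain xs ys where "concat ?Q = xs @ ys" "concat T = xs @ ?v # ys"
    using ins_odd_split[OF ins(2), of ?v] by auto
  then have "distinct (concat ?Q) \<and> set (concat ?Q) = {1..m}"
    using assms(1) perm_insert_Suc_iff[of xs m ys] by (auto simp: eo_arr_def)
  moreover have "\<forall>s\<in>set ?Q. eo_desc s"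
    using eo_desc_del_odd ends assms(1) by (auto simp: eo_arr_def)
  moreover have "heads_odd (tl ?Q)" "?Q \<noteq> []"
    using T(3) heads_odd_del_odd_tl[of "tl T" ?v] ends assms(1) by (cases T; auto simp: eo_arr_def)+
  ultimately show ?thesis using ins slot by (auto simp: eo_arr_def)
qed

lemma bij_betw_ins_odd:
  assumes "odd (Suc m)"
  shows "bij_betw (\<lambda>(Q, c). ins_odd (Suc m) Q c) (SIGMA Q:eo_arrs m. odd_slots Q) (eo_arrs (Suc m))"
proof (rule bij_betw_byWitness[where f' = "\<lambda>T. (del_odd (Suc m) T, odd_slot (Suc m) T)"])
  show "\<forall>a\<in>SIGMA Q:eo_arrs m. odd_slots Q.
      (\<lambda>T. (del_odd (Suc m) T, odd_slot (Suc m) T)) ((\<lambda>(Q, c). ins_odd (Suc m) Q c) a) = a"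
  proof safe
    fix Q i b assume "Q \<in> eo_arrs m" "(i, b) \<in> odd_slots Q"
    moreover have "Suc m \<notin> set (concat Q)" if "eo_arr m Q" using eo_arr_less_Suc[OF that] by auto
    ultimately show "del_odd (Suc m) (ins_odd (Suc m) Q (i, b)) = Q" "odd_slot (Suc m) (ins_odd (Suc m) Q (i, b)) = (i, b)"
      using del_odd_ins_odd[of Q "Suc m" i b] by (auto simp: eo_arrs_def eo_arr_def)
  qed
qed (use eo_arr_del_odd[OF _ assms] eo_arr_ins_odd[OF _ _ assms] in \<open>auto simp: eo_arrs_def\<close>)

fun del_even :: "nat \<Rightarrow> nat list list \<Rightarrow> nat list list" where
  "del_even v [] = []"
| "del_even v (s # Q) = (if v \<in> set s then
      (if last s = v then butlast s # Q
       else takeWhile (\<lambda>x. x \<noteq> v) s # tl (dropWhile (\<lambda>x. x \<noteq> v) s) # Q)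
    else s # del_even v Q)"

fun even_slot :: "nat \<Rightarrow> nat list list \<Rightarrow> nat \<times> bool" where
  "even_slot v [] = (0, False)"
| "even_slot v (s # Q) = (if v \<in> set s then (0, last s \<noteq> v)
      else (case even_slot v Q of (i, c) \<Rightarrow> (Suc i, c)))"

lemma del_even_id: "v \<notin> set (concat Q) \<Longrightarrow> del_even v Q = Q"
  by (induction Q) auto

lemma del_even_Cons_split:
  assumes "v \<notin> set a" "v \<notin> set t"
  shows "del_even v ((a @ v # t) # Q) = (if t = [] then a # Q else a # t # Q)
    \<and> even_slot v ((a @ v # t) # Q) = (0, t \<noteq> [])"
proof -
  have "takeWhile (\<lambda>x. x \<noteq> v) (a @ v # t) = a" "dropWhile (\<lambda>x. x \<noteq> v) (a @ v # t) = v # t"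
    using assms(1) by (induction a) auto
  moreover have "t \<noteq> [] \<Longrightarrow> last t \<noteq> v" using assms(2) last_in_set by blast
  ultimately show ?thesis by auto
qed

lemma del_even_ins_even:
  "v \<notin> set (concat Q) \<Longrightarrow> heads_odd (tl Q) \<Longrightarrow> (i, c) \<in> even_slots Q \<Longrightarrow>
   del_even v (ins_even v Q (i, c)) = Q \<and> even_slot v (ins_even v Q (i, c)) = (i, c)"
proof (induction v Q "(i, c)" arbitrary: i rule: ins_even.induct)
  case (2 v s Q)
  then show ?case using del_even_Cons_split[of v s "[]" Q] by (auto simp: del_even_id)
next
  case (4 v s t Q)
  then show ?case using del_even_Cons_split[of v s t Q] by (auto simp: del_even_id)
next
  case (5 v s Q i)
  then show ?case by (cases Q) auto
qed auto

lemma ins_even_del_even: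
  "v \<in> set (concat T) \<Longrightarrow> distinct (concat T) \<Longrightarrow>
   ins_even v (del_even v T) (even_slot v T) = T \<and> even_slot v T \<in> even_slots (del_even v T)"
proof (induction T)
  case (Cons s Q)
  show ?case
  proof (cases "v \<in> set s")
    case True
    then obtain a t where s: "s = a @ v # t" "v \<notin> set a" by (meson split_list_first)
    moreover have "v \<notin> set t" using Cons.prems(2) s by auto
    ultimately show ?thesis using del_even_Cons_split[of v a t Q] by (cases t) auto
  next
    case False
    then show ?thesis using Cons by (auto split: prod.splits)
  qed
qed simp

lemma del_even_Cons_max:
  assumes "v \<in> set s" "distinct s" "eo_desc s" "\<forall>x\<in>set s. x \<le> v"
  obtains a t where "s = a @ v # t" "del_even v (s # Q) = (if t = [] then a # Q else a # t # Q)"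
    "eo_desc a" "eo_desc t" "t \<noteq> [] \<Longrightarrow> odd (hd t)"
proof -
  obtain a t where s: "s = a @ v # t" "v \<notin> set a" using assms(1) by (meson split_list_first)
  moreover have t: "v \<notin> set t" using assms(2) s by auto
  moreover have "t \<noteq> [] \<Longrightarrow> hd t < v"
    using assms(4) t s by (metis Un_iff hd_in_set le_neq_implies_less list.set_intros(2) set_append)
  ultimately show ?thesis
    using that del_even_Cons_split[of v a t Q] eo_desc_split[of a v t] eo_desc_split_hd_odd[of a v t] assms(3)
    by auto
qed

lemma heads_odd_del_even:
  "heads_odd Q \<Longrightarrow> even v \<Longrightarrow> distinct (concat Q) \<Longrightarrow> \<forall>s\<in>set Q. eo_desc s \<Longrightarrow>
   \<forall>x\<in>set (concat Q). x \<le> v \<Longrightarrow> heads_odd (del_even v Q)"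
proof (induction Q)
  case (Cons s Q)
  show ?case
  proof (cases "v \<in> set s")
    case True
    then have "v \<in> set s" "distinct s" "eo_desc s" "\<forall>x\<in>set s. x \<le> v" using Cons.prems by auto
    then obtain a t where "s = a @ v # t" "del_even v (s # Q) = (if t = [] then a # Q else a # t # Q)"
      "t \<noteq> [] \<Longrightarrow> odd (hd t)"
      by (rule del_even_Cons_max[where Q = Q]) blast
    moreover have "a \<noteq> []" using Cons.prems(1,2) \<open>s = a @ v # t\<close> by (cases a) auto
    ultimately show ?thesis using Cons.prems by auto
  qed (use Cons in auto)
qed simp

lemma heads_odd_tl_del_even:
  assumes "heads_odd (tl T)" "even v" "distinct (concat T)" "\<forall>s\<in>set T. eo_desc s" "\<forall>x\<in>set (concat T). x \<le> v"
  shows "heads_odd (tl (del_even v T))"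
proof (cases T)
  case (Cons s Q)
  show ?thesis
  proof (cases "v \<in> set s")
    case True
    then have "v \<in> set s" "distinct s" "eo_desc s" "\<forall>x\<in>set s. x \<le> v" using assms Cons by auto
    then obtain a t where "del_even v (s # Q) = (if t = [] then a # Q else a # t # Q)" "t \<noteq> [] \<Longrightarrow> odd (hd t)"
      by (rule del_even_Cons_max[where Q = Q]) blast
    then show ?thesis using assms(1) Cons by auto
  next
    case False
    then show ?thesis using heads_odd_del_even[of Q v] assms Cons by auto
  qed
qed simp

lemma eo_desc_del_even:
  "distinct (concat T) \<Longrightarrow> \<forall>s\<in>set T. eo_desc s \<Longrightarrow> \<forall>s\<in>set (del_even v T). eo_desc s"
proof (induction T)
  case (Cons s Q)
  show ?case
  proof (cases "v \<in> set s")
    case True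
    then obtain a t where s: "s = a @ v # t" "v \<notin> set a" by (meson split_list_first)
    moreover have "v \<notin> set t" using Cons.prems(1) s by auto
    ultimately show ?thesis
      using del_even_Cons_split[of v a t Q] eo_desc_split[of a v t] Cons.prems by auto
  qed (use Cons in auto)
qed simp

lemma eo_arr_del_even:
  assumes "eo_arr (Suc m) T" "even (Suc m)"
  shows "eo_arr m (del_even (Suc m) T) \<and> even_slot (Suc m) T \<in> even_slots (del_even (Suc m) T)
     \<and> ins_even (Suc m) (del_even (Suc m) T) (even_slot (Suc m) T) = T"
proof -
  let ?v = "Suc m" and ?Q = "del_even (Suc m) T"
  obtain i c where slot: "even_slot ?v T = (i, c)" by fastforce
  have T: "?v \<in> set (concat T)" "distinct (concat T)" "T \<noteq> []" "\<forall>s\<in>set T. eo_desc s"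
    "\<forall>x\<in>set (concat T). x \<le> ?v" "heads_odd (tl T)"
    using assms(1) by (auto simp: eo_arr_def)
  then have ins: "ins_even ?v ?Q (i, c) = T" "(i, c) \<in> even_slots ?Q"
    using ins_even_del_even[OF T(1,2)] slot by auto
  then obtain xs ys where "concat ?Q = xs @ ys" "concat T = xs @ ?v # ys"
    using ins_even_split[OF ins(2), of ?v] by auto
  then have "distinct (concat ?Q) \<and> set (concat ?Q) = {1..m}"
    using assms(1) perm_insert_Suc_iff[of xs m ys] by (auto simp: eo_arr_def)
  moreover have "?Q \<noteq> []" using T(3) by (cases T) auto
  ultimately show ?thesis
    using ins slot eo_desc_del_even[OF T(2,4)] heads_odd_tl_del_even[OF T(6) assms(2) T(2,4,5)]
    by (auto simp: eo_arr_def)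
qed

lemma bij_betw_ins_even:
  assumes "even (Suc m)"
  shows "bij_betw (\<lambda>(Q, c). ins_even (Suc m) Q c) (SIGMA Q:eo_arrs m. even_slots Q) (eo_arrs (Suc m))"
proof (rule bij_betw_byWitness[where f' = "\<lambda>T. (del_even (Suc m) T, even_slot (Suc m) T)"])
  show "\<forall>a\<in>SIGMA Q:eo_arrs m. even_slots Q.
      (\<lambda>T. (del_even (Suc m) T, even_slot (Suc m) T)) ((\<lambda>(Q, c). ins_even (Suc m) Q c) a) = a"
  proof safe
    fix Q i c assume "Q \<in> eo_arrs m" "(i, c) \<in> even_slots Q"
    moreover have "Suc m \<notin> set (concat Q)" if "eo_arr m Q" using eo_arr_less_Suc[OF that] by auto
    ultimately show "del_even (Suc m) (ins_even (Suc m) Q (i, c)) = Q" "even_slot (Suc m) (ins_even (Suc m) Q (i, c)) = (i, c)"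
      using del_even_ins_even[of "Suc m" Q i c] by (auto simp: eo_arrs_def eo_arr_def)
  qed
qed (use eo_arr_del_even[OF _ assms] eo_arr_ins_even[OF _ _ assms] in \<open>auto simp: eo_arrs_def\<close>)

subsection \<open>Weighted Motzkin paths\<close>

text \<open>path_count k h d is the weighted number of Motzkin paths of length k from height h down to
  height 0 with d up steps, where a level step at height h has weight (h + 1)^2, a down step from h
  has weight h (h + 1) and an up step from h has weight (h + 1) (h + 2).\<close>

fun path_count :: "nat \<Rightarrow> nat \<Rightarrow> nat \<Rightarrow> nat" where
  "path_count 0 h d = (if h = 0 \<and> d = 0 then 1 else 0)"
| "path_count (Suc k) h d = (h + 1)^2 * path_count k h d + h * (h + 1) * path_count k (h - 1) d
     + (h + 1) * (h + 2) * (if d = 0 then 0 else path_count k (h + 1) (d - 1))"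

lemma path_count_nonzero: "path_count k h d \<noteq> 0 \<Longrightarrow> h + 2 * d \<le> k"
proof (induction k arbitrary: h d)
  case (Suc k)
  consider "path_count k h d \<noteq> 0" | "h \<noteq> 0" "path_count k (h - 1) d \<noteq> 0"
    | "d \<noteq> 0" "path_count k (h + 1) (d - 1) \<noteq> 0"
    using Suc.prems by (auto split: if_splits)
  then show ?case
    by cases (use Suc.IH[of h d] Suc.IH[of "h - 1" d] Suc.IH[of "h + 1" "d - 1"] in auto)
qed (simp split: if_splits)

lemma path_count_eq_0: "k < h + 2 * d \<Longrightarrow> path_count k h d = 0"
  using path_count_nonzero by fastforce

definition path_sum :: "'a::comm_semiring_1 \<Rightarrow> 'a \<Rightarrow> nat \<Rightarrow> nat \<Rightarrow> 'a" where
  "path_sum x y k h = (\<Sum>d\<le>k. of_nat (path_count k h d) * x ^ d * y ^ (k - h - 2 * d))"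

lemma path_sum_eq_0: "k < h \<Longrightarrow> path_sum x y k h = 0"
  unfolding path_sum_def using path_count_eq_0 by (intro sum.neutral) auto

lemma sum_path_count_Suc:
  "(\<Sum>d\<le>Suc k. of_nat (path_count k h d) * f d) = (\<Sum>d\<le>k. of_nat (path_count k h d) * (f d :: 'a::comm_semiring_1))"
  using path_count_eq_0[of k h "Suc k"] by simp

lemma path_sum_Suc:
  "path_sum x y (Suc k) h = of_nat ((h + 1)^2) * y * path_sum x y k h
     + of_nat (h * (h + 1)) * path_sum x y k (h - 1) + of_nat ((h + 1) * (h + 2)) * x * path_sum x y k (h + 1)"
proof -
  define w where "w d = x ^ d * y ^ (Suc k - h - 2 * d)" for d
  have level: "(\<Sum>d\<le>Suc k. of_nat (path_count k h d) * w d) = y * path_sum x y k h"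
  proof -
    have "of_nat (path_count k h d) * w d = y * (of_nat (path_count k h d) * x ^ d * y ^ (k - h - 2 * d))" for d
    proof (cases "path_count k h d = 0")
      case False
      then have "Suc k - h - 2 * d = Suc (k - h - 2 * d)" using path_count_nonzero by fastforce
      then show ?thesis by (simp add: w_def algebra_simps)
    qed simp
    then show ?thesis unfolding sum_path_count_Suc by (simp add: path_sum_def sum_distrib_left)
  qed
  have down: "of_nat (h * (h + 1)) * (\<Sum>d\<le>Suc k. of_nat (path_count k (h - 1) d) * w d)
      = of_nat (h * (h + 1)) * path_sum x y k (h - 1)"
    unfolding sum_path_count_Suc by (cases h) (simp_all add: path_sum_def w_def mult.assoc)
  have up: "(\<Sum>d\<le>Suc k. of_nat (if d = 0 then 0 else path_count k (h + 1) (d - 1)) * w d)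
      = x * path_sum x y k (h + 1)"
    by (simp only: sum.atMost_Suc_shift)
      (simp add: path_sum_def w_def sum_distrib_left algebra_simps)
  have "path_sum x y (Suc k) h = (\<Sum>d\<le>Suc k. of_nat ((h + 1)^2) * (of_nat (path_count k h d) * w d)
      + of_nat (h * (h + 1)) * (of_nat (path_count k (h - 1) d) * w d)
      + of_nat ((h + 1) * (h + 2)) * (of_nat (if d = 0 then 0 else path_count k (h + 1) (d - 1)) * w d))"
    unfolding path_sum_def w_def
    by (rule sum.cong[OF refl]) (subst path_count.simps, simp only: of_nat_mult of_nat_add distrib_right mult.assoc)
  also have "\<dots> = of_nat ((h + 1)^2) * (y * path_sum x y k h) + of_nat (h * (h + 1)) * path_sum x y k (h - 1)
      + of_nat ((h + 1) * (h + 2)) * (x * path_sum x y k (h + 1))"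
    unfolding sum.distrib sum_distrib_left[symmetric] level down up ..
  finally show ?thesis by (simp only: mult.assoc)
qed

lemma sum_tridiagonal_transpose:
  fixes A :: "nat \<Rightarrow> 'a::comm_semiring_1"
  assumes z: "\<forall>h>k. A h = 0" and b0: "\<beta> 0 = 0"
  shows "(\<Sum>h\<le>k. A h * (\<alpha> h * \<phi> h + \<beta> h * \<phi> (h - 1) + \<gamma> h * \<phi> (Suc h))) =
         (\<Sum>h\<le>Suc k. (\<alpha> h * A h + \<beta> (Suc h) * A (Suc h) + (if h = 0 then 0 else \<gamma> (h - 1) * A (h - 1))) * \<phi> h)"
proof -
  have S1: "(\<Sum>h\<le>Suc k. \<alpha> h * A h * \<phi> h) = (\<Sum>h\<le>k. A h * (\<alpha> h * \<phi> h))"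
    using z by (simp add: mult_ac)
  have S2: "(\<Sum>h\<le>Suc k. \<beta> (Suc h) * A (Suc h) * \<phi> h) = (\<Sum>h\<le>k. A h * (\<beta> h * \<phi> (h - 1)))"
  proof -
    have "(\<Sum>h\<le>k. A h * (\<beta> h * \<phi> (h - 1))) = (\<Sum>h\<le>Suc k. A h * (\<beta> h * \<phi> (h - 1)))"
      using z by simp
    also have "\<dots> = (\<Sum>h\<le>k. A (Suc h) * (\<beta> (Suc h) * \<phi> h))"
      by (simp only: sum.atMost_Suc_shift) (simp add: b0)
    also have "\<dots> = (\<Sum>h\<le>Suc k. \<beta> (Suc h) * A (Suc h) * \<phi> h)"
      using z by (simp add: mult_ac)
    finally show ?thesis by simp
  qed
  have S3: "(\<Sum>h\<le>Suc k. (if h = 0 then 0 else \<gamma> (h - 1) * A (h - 1)) * \<phi> h) = (\<Sum>h\<le>k. A h * (\<gamma> h * \<phi> (Suc h)))"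
    by (simp only: sum.atMost_Suc_shift) (simp add: mult_ac)
  have "(\<Sum>h\<le>Suc k. (\<alpha> h * A h + \<beta> (Suc h) * A (Suc h) + (if h = 0 then 0 else \<gamma> (h - 1) * A (h - 1))) * \<phi> h)
     = (\<Sum>h\<le>Suc k. \<alpha> h * A h * \<phi> h) + (\<Sum>h\<le>Suc k. \<beta> (Suc h) * A (Suc h) * \<phi> h)
       + (\<Sum>h\<le>Suc k. (if h = 0 then 0 else \<gamma> (h - 1) * A (h - 1)) * \<phi> h)"
    by (simp only: distrib_right sum.distrib)
  also have "\<dots> = (\<Sum>h\<le>k. A h * (\<alpha> h * \<phi> h + \<beta> h * \<phi> (h - 1) + \<gamma> h * \<phi> (Suc h)))"
    unfolding S1 S2 S3 by (simp only: distrib_left sum.distrib)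
  finally show ?thesis by simp
qed

lemma eo_arrs_0: "eo_arrs 0 = {[[]]}"
proof -
  have "Q = [[]]" if "eo_arr 0 Q" for Q
  proof -
    have "\<forall>s\<in>set Q. s = []" "Q \<noteq> []" "heads_odd (tl Q)" using that by (auto simp: eo_arr_def)
    then show ?thesis by (cases Q; cases "tl Q") auto
  qed
  then show ?thesis by (auto simp: eo_arrs_def eo_arr_def)
qed

lemma finite_eo_arrs: "finite (eo_arrs m)"
proof (induction m)
  case (Suc m)
  show ?case
  proof (cases "odd (Suc m)")
    case True
    then show ?thesis
      using bij_betw_finite[OF bij_betw_ins_odd] Suc finite_odd_slots by (auto intro: finite_SigmaI)
  next
    case False
    then show ?thesis
      using bij_betw_finite[OF bij_betw_ins_even] Suc finite_even_slots by (auto intro: finite_SigmaI)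
  qed
qed (simp add: eo_arrs_0)

lemma sum_eo_arrs_Suc_odd:
  "odd (Suc m) \<Longrightarrow> (\<Sum>T\<in>eo_arrs (Suc m). F T) = (\<Sum>Q\<in>eo_arrs m. \<Sum>c\<in>odd_slots Q. F (ins_odd (Suc m) Q c))"
  by (subst sum.reindex_bij_betw[OF bij_betw_ins_odd, symmetric])
    (auto simp: sum.Sigma finite_eo_arrs finite_odd_slots case_prod_unfold)

lemma sum_eo_arrs_Suc_even:
  "even (Suc m) \<Longrightarrow> (\<Sum>T\<in>eo_arrs (Suc m). F T) = (\<Sum>Q\<in>eo_arrs m. \<Sum>c\<in>even_slots Q. F (ins_even (Suc m) Q c))"
  by (subst sum.reindex_bij_betw[OF bij_betw_ins_even, symmetric])
    (auto simp: sum.Sigma finite_eo_arrs finite_even_slots case_prod_unfold)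

definition arr_weight :: "bool \<Rightarrow> (nat \<Rightarrow> int poly) \<Rightarrow> nat list list \<Rightarrow> int poly" where
  "arr_weight prim \<phi> Q = (if prim \<longrightarrow> primary_arr Q then \<phi> (length Q - 1) * monom 1 (des_arr Q) else 0)"

definition transfer :: "int poly \<Rightarrow> (nat \<Rightarrow> int poly) \<Rightarrow> nat \<Rightarrow> int poly" where
  "transfer y \<phi> h = of_nat ((h + 1)^2) * y * \<phi> h
     + of_nat ((h + 1) * h) * monom 1 1 * \<phi> (h - 1) + of_nat ((h + 1) * (h + 2)) * \<phi> (Suc h)"

lemma sum_path_sum_transfer:
  "(\<Sum>h\<le>k. path_sum (monom 1 1) y k h * transfer y \<phi> h) = (\<Sum>h\<le>Suc k. path_sum (monom 1 1) y (Suc k) h * \<phi> h)"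
proof -
  let ?P = "path_sum (monom 1 1) y"
  have "(\<Sum>h\<le>k. ?P k h * transfer y \<phi> h)
      = (\<Sum>h\<le>Suc k. (of_nat ((h + 1)^2) * y * ?P k h + of_nat ((Suc h + 1) * Suc h) * monom 1 1 * ?P k (Suc h)
        + (if h = 0 then 0 else of_nat ((h - 1 + 1) * (h - 1 + 2)) * ?P k (h - 1))) * \<phi> h)"
    unfolding transfer_def
    by (rule sum_tridiagonal_transpose[where \<alpha> = "\<lambda>h. of_nat ((h + 1)^2) * y"
        and \<beta> = "\<lambda>h. of_nat ((h + 1) * h) * monom 1 1" and \<gamma> = "\<lambda>h. of_nat ((h + 1) * (h + 2))"])
      (auto simp: path_sum_eq_0)
  also have "\<dots> = (\<Sum>h\<le>Suc k. ?P (Suc k) h * \<phi> h)"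
  proof (rule sum.cong[OF refl])
    fix h
    have "(if h = 0 then 0 else of_nat ((h - 1 + 1) * (h - 1 + 2)) * ?P k (h - 1)) = of_nat (h * (h + 1)) * ?P k (h - 1)"
      by (cases h) (simp_all add: algebra_simps)
    then show "(of_nat ((h + 1)^2) * y * ?P k h + of_nat ((Suc h + 1) * Suc h) * monom 1 1 * ?P k (Suc h)
        + (if h = 0 then 0 else of_nat ((h - 1 + 1) * (h - 1 + 2)) * ?P k (h - 1))) * \<phi> h = ?P (Suc k) h * \<phi> h"
      unfolding path_sum_Suc by (simp add: algebra_simps)
  qed
  finally show ?thesis .
qed

text \<open>The odd letter 2k + 1 becomes a bottom iff it opens a new block (b), and gluing with 2k + 2
  makes 2k + 2 a top; so primality is lost exactly when b and c both hold.\<close>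

lemma arr_weight_ins_odd_ins_even:
  assumes R: "R \<in> eo_arrs (2 * k)" and ib: "(i, b) \<in> odd_slots R"
    and jc: "(j, c) \<in> even_slots (ins_odd (Suc (2 * k)) R (i, b))"
  shows "arr_weight prim \<phi> (ins_even (Suc (Suc (2 * k))) (ins_odd (Suc (2 * k)) R (i, b)) (j, c))
    = (if prim \<longrightarrow> primary_arr R \<and> \<not> (b \<and> c)
       then \<phi> (length R + of_bool b - of_bool c - 1) * monom 1 (des_arr R + of_bool c) else 0)"
proof -
  let ?o = "Suc (2 * k)" and ?e = "Suc (Suc (2 * k))"
  let ?Q = "ins_odd ?o R (i, b)"
  have vR: "eo_arr (2 * k) R" using R by (simp add: eo_arrs_def)
  then have ltR: "\<forall>x\<in>set (concat R). x < ?o" and tR: "heads_odd (tl R)"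
    using eo_arr_less_Suc by (auto simp: eo_arr_def)
  have vQ: "eo_arr ?o ?Q" using eo_arr_ins_odd[OF vR ib] by simp
  then have ltQ: "\<forall>x\<in>set (concat ?Q). x < ?e" and tQ: "heads_odd (tl ?Q)"
    using eo_arr_less_Suc by (auto simp: eo_arr_def)
  have "?o \<notin> arr_bots R" using arr_bots_subset[OF tR] ltR by fastforce
  then have "?o \<in> arr_bots ?Q \<longleftrightarrow> b" using arr_bots_ins_odd[OF ltR tR ib] by auto
  then have "primary_arr (ins_even ?e ?Q (j, c)) \<longleftrightarrow> primary_arr R \<and> \<not> (b \<and> c)"
    using primary_arr_ins_even[OF ltQ tQ jc] primary_arr_ins_odd[OF ltR tR ib] by auto
  moreover have "length (ins_even ?e ?Q (j, c)) = length R + of_bool b - of_bool c"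
    using length_ins_even[OF jc] length_ins_odd[OF ib] by simp
  moreover have "des_arr (ins_even ?e ?Q (j, c)) = des_arr R + of_bool c"
    using des_arr_ins_even[OF ltQ tQ jc] des_arr_ins_odd[OF ltR] by simp
  ultimately show ?thesis unfolding arr_weight_def by (cases b; cases c) simp_all
qed

lemma pCons_1_1_eq: "[:1, 1:] = (1 + monom 1 1 :: int poly)"
  by (simp add: poly_eq_iff coeff_pCons split: nat.splits)

lemma sum_arr_weight_two_steps:
  assumes R: "R \<in> eo_arrs (2 * k)"
  shows "(\<Sum>c1\<in>odd_slots R. \<Sum>c2\<in>even_slots (ins_odd (Suc (2 * k)) R c1).
            arr_weight prim \<phi> (ins_even (Suc (Suc (2 * k))) (ins_odd (Suc (2 * k)) R c1) c2))
       = arr_weight prim (transfer (if prim then 1 else [:1, 1:]) \<phi>) R"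
proof -
  let ?o = "Suc (2 * k)" and ?e = "Suc (Suc (2 * k))"
  define G where "G b c = (if prim \<longrightarrow> primary_arr R \<and> \<not> (b \<and> c)
    then \<phi> (length R + of_bool b - of_bool c - 1) * monom 1 (des_arr R + of_bool c) else 0)" for b c
  define H where "H b = of_nat (length R + of_bool b) * G b False + of_nat (length R + of_bool b - 1) * G b True"
    for b
  have "(\<Sum>c2\<in>even_slots (ins_odd ?o R c1). arr_weight prim \<phi> (ins_even ?e (ins_odd ?o R c1) c2)) = H (snd c1)"
    if c1: "c1 \<in> odd_slots R" for c1
  proof -
    obtain i b where ib: "c1 = (i, b)" by fastforce
    have "(\<Sum>c2\<in>even_slots (ins_odd ?o R (i, b)). arr_weight prim \<phi> (ins_even ?e (ins_odd ?o R (i, b)) c2))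
        = (\<Sum>c2\<in>even_slots (ins_odd ?o R (i, b)). G b (snd c2))"
      using arr_weight_ins_odd_ins_even[OF R] c1 ib by (intro sum.cong) (auto simp: G_def)
    moreover have "length (ins_odd ?o R (i, b)) = length R + of_bool b"
      using length_ins_odd c1 ib by simp
    ultimately show ?thesis using ib by (simp only: sum_even_slots H_def snd_conv)
  qed
  then have "(\<Sum>c1\<in>odd_slots R. \<Sum>c2\<in>even_slots (ins_odd ?o R c1).
      arr_weight prim \<phi> (ins_even ?e (ins_odd ?o R c1) c2)) = of_nat (length R) * (H False + H True)"
    using sum_odd_slots[of H R] by (simp cong: sum.cong)
  also have "\<dots> = arr_weight prim (transfer (if prim then 1 else [:1, 1:]) \<phi>) R"
  proof (cases "prim \<longrightarrow> primary_arr R")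
    case True
    obtain h where h: "length R = Suc h"
      using R by (cases "length R") (auto simp: eo_arrs_def eo_arr_def)
    have "monom (1::int) (Suc (des_arr R)) = monom 1 (des_arr R) * monom 1 1"
      by (simp add: mult_monom)
    then show ?thesis using True unfolding H_def G_def arr_weight_def transfer_def h pCons_1_1_eq
      by (cases prim) (simp_all add: algebra_simps power2_eq_square)
  qed (auto simp: H_def G_def arr_weight_def)
  finally show ?thesis .
qed

lemma sum_arr_weight:
  "(\<Sum>Q\<in>eo_arrs (2 * k). arr_weight prim \<phi> Q)
     = (\<Sum>h\<le>k. path_sum (monom 1 1) (if prim then 1 else [:1, 1:]) k h * \<phi> h)"
proof (induction k arbitrary: \<phi>)
  case 0
  have "primary_arr [[]]" by (simp add: primary_arr_def)
  then show ?case by (simp add: eo_arrs_0 arr_weight_def des_arr_def path_sum_def)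
next
  case (Suc k)
  let ?o = "Suc (2 * k)" and ?e = "Suc (Suc (2 * k))" and ?y = "if prim then 1 else [:1, 1:] :: int poly"
  have "(\<Sum>Q\<in>eo_arrs (2 * Suc k). arr_weight prim \<phi> Q)
      = (\<Sum>Q\<in>eo_arrs ?o. \<Sum>c2\<in>even_slots Q. arr_weight prim \<phi> (ins_even ?e Q c2))"
    by (simp add: sum_eo_arrs_Suc_even)
  also have "\<dots> = (\<Sum>R\<in>eo_arrs (2 * k). \<Sum>c1\<in>odd_slots R. \<Sum>c2\<in>even_slots (ins_odd ?o R c1).
      arr_weight prim \<phi> (ins_even ?e (ins_odd ?o R c1) c2))"
    by (rule sum_eo_arrs_Suc_odd) simp
  also have "\<dots> = (\<Sum>R\<in>eo_arrs (2 * k). arr_weight prim (transfer ?y \<phi>) R)"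
    using sum_arr_weight_two_steps by (intro sum.cong) auto
  also have "\<dots> = (\<Sum>h\<le>k. path_sum (monom 1 1) ?y k h * transfer ?y \<phi> h)"
    by (rule Suc.IH)
  also have "\<dots> = (\<Sum>h\<le>Suc k. path_sum (monom 1 1) ?y (Suc k) h * \<phi> h)"
    by (rule sum_path_sum_transfer)
  finally show ?case .
qed

lemma singleton_eo_arrs_iff: "[xs] \<in> eo_arrs m \<longleftrightarrow> xs \<in> XX m"
  unfolding eo_arrs_def eo_arr_def XX_def perms_def eo_desc_iff by auto

text \<open>Bottoms are odd and tops even, so a top exceeding a bottom by at most 2 exceeds it by exactly 1.\<close>

lemma primary_arr_singleton_iff:
  assumes "xs \<in> XX m"
  shows "primary_arr [xs] \<longleftrightarrow> primary xs"
proof -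
  have par: "\<forall>t\<in>descent_tops xs. even t" "\<forall>b\<in>descent_bottoms xs. odd b"
    using assms unfolding XX_def descent_tops_def descent_bottoms_def by auto
  have "primary_arr [xs] \<longleftrightarrow> (\<forall>b\<in>descent_bottoms xs. Suc b \<notin> descent_tops xs)"
    unfolding primary_arr_def arr_tops_def by (simp add: tops_eq_descent_tops bots_eq_descent_bottoms)
  also have "\<dots> \<longleftrightarrow> primary xs"
    unfolding primary_def
  proof (intro iffI ballI impI)
    fix t b assume "\<forall>b\<in>descent_bottoms xs. Suc b \<notin> descent_tops xs"
      "t \<in> descent_tops xs" "b \<in> descent_bottoms xs" "b < t"
    moreover from this have "t \<noteq> Suc b" "t \<noteq> Suc (Suc b)" using par by auto
    ultimately show "3 \<le> t - b" by linarith
  qed fastforce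
  finally show ?thesis .
qed

lemma finite_XX: "finite (XX m)"
proof -
  have "XX m = hd ` {Q\<in>eo_arrs m. length Q = 1}"
    using singleton_eo_arrs_iff by (auto simp: length_Suc_conv intro!: image_eqI[where x = "[_]"])
  then show ?thesis using finite_eo_arrs by simp
qed

lemma path_sum_height_0:
  "path_sum (monom 1 1) (if prim then 1 else [:1, 1:]) n 0
     = (\<Sum>xs\<in>XX (2 * n). if prim \<longrightarrow> primary xs then monom 1 (des xs) else 0 :: int poly)"
proof -
  let ?\<delta> = "\<lambda>h. if h = 0 then 1 else 0 :: int poly"
  have "path_sum (monom 1 1) (if prim then 1 else [:1, 1:]) n 0 = (\<Sum>Q\<in>eo_arrs (2 * n). arr_weight prim ?\<delta> Q)"
    unfolding sum_arr_weight by (simp add: if_distrib[of "\<lambda>x. _ * x"] cong: if_cong)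
  also have "\<dots> = (\<Sum>Q\<in>{Q\<in>eo_arrs (2 * n). length Q = 1}. arr_weight prim ?\<delta> Q)"
    using finite_eo_arrs[of "2 * n"]
    by (intro sum.mono_neutral_right) (auto simp: arr_weight_def eo_arrs_def eo_arr_def le_Suc_eq)
  also have "{Q\<in>eo_arrs (2 * n). length Q = 1} = (\<lambda>xs. [xs]) ` XX (2 * n)"
    using singleton_eo_arrs_iff by (auto simp: length_Suc_conv)
  also have "(\<Sum>Q\<in>(\<lambda>xs. [xs]) ` XX (2 * n). arr_weight prim ?\<delta> Q)
      = (\<Sum>xs\<in>XX (2 * n). if prim \<longrightarrow> primary xs then monom 1 (des xs) else 0)"
    by (subst sum.reindex)
      (auto simp: inj_on_def arr_weight_def des_arr_def des_eq_ndes primary_arr_singleton_iff intro!: sum.cong)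
  finally show ?thesis .
qed

lemma Xpoly_eq_path_sum: "Xpoly n = path_sum (monom 1 1) [:1, 1:] n 0"
  using path_sum_height_0[of False n] by (simp add: Xpoly_def)

lemma coeff_path_sum_monom: "coeff (path_sum (monom 1 1) 1 n 0 :: int poly) j = int (path_count n 0 j)"
proof -
  have "coeff (path_sum (monom 1 1) 1 n 0 :: int poly) j = (\<Sum>d\<le>n. if d = j then int (path_count n 0 d) else 0)"
    unfolding path_sum_def coeff_sum by (intro sum.cong) (auto simp: of_nat_poly monom_power coeff_monom)
  also have "\<dots> = int (path_count n 0 j)"
    using path_count_eq_0[of n 0 j] by (subst sum.delta) auto
  finally show ?thesis .
qed

lemma gamma_eq_path_count: "gamma n j = path_count n 0 j"
proof -
  have "int (path_count n 0 j) = (\<Sum>xs\<in>XX (2 * n). if primary xs \<and> des xs = j then 1 else 0)"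
    using path_sum_height_0[of True n]
    by (simp add: coeff_path_sum_monom[symmetric] coeff_sum coeff_monom if_distrib[of "\<lambda>p. coeff p j"])
      (auto intro: sum.cong)
  also have "\<dots> = int (gamma n j)"
    using finite_XX by (simp add: sum.If_cases gamma_def Int_def)
  finally show ?thesis by simp
qed

subsection \<open>The continued fraction\<close>

text \<open>path_weight t b k g is the weight of the Motzkin paths of length k from height g down to
  height b that never go below b, with the weights of path_count and an extra factor t per up step.\<close>

fun path_weight :: "real \<Rightarrow> nat \<Rightarrow> nat \<Rightarrow> nat \<Rightarrow> real" where
  "path_weight t b 0 g = (if g = b then 1 else 0)"
| "path_weight t b (Suc k) g = (if g < b then 0 else
     real ((g + 1)^2) * path_weight t b k g + (if b < g then real (g * (g + 1)) * path_weight t b k (g - 1) else 0)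
     + real ((g + 1) * (g + 2)) * t * path_weight t b k (g + 1))"

lemma path_weight_0_eq_path_sum: "path_weight t 0 k h = path_sum t 1 k h"
proof (induction k arbitrary: h)
  case 0 then show ?case by (simp add: path_sum_def)
next
  case (Suc k)
  show ?case unfolding path_sum_Suc using Suc by (cases h) auto
qed
lemma path_weight_first_passage:
  assumes "b < g"
  shows "path_weight t b k g
    = (\<Sum>i<k. path_weight t b i b * real ((b + 1) * (b + 2)) * path_weight t (Suc b) (k - 1 - i) g)"
  using assms
proof (induction k arbitrary: g)
  case (Suc k)
  let ?W = "path_weight t" and ?u = "real ((b + 1) * (b + 2))"
  define S where "S g' = (\<Sum>i<k. ?W b i b * ?u * ?W (Suc b) (k - 1 - i) g')" for g'
  have IH: "?W b k g' = S g'" if "b < g'" for g' using Suc.IH that by (simp add: S_def)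
  have step: "?W (Suc b) (k - i) g = real ((g + 1)^2) * ?W (Suc b) (k - 1 - i) g
      + (if Suc b < g then real (g * (g + 1)) * ?W (Suc b) (k - 1 - i) (g - 1) else 0)
      + real ((g + 1) * (g + 2)) * t * ?W (Suc b) (k - 1 - i) (g + 1)" if "i < k" for i
  proof -
    have "k - i = Suc (k - 1 - i)" using that by simp
    then show ?thesis using Suc.prems by simp
  qed
  have "(\<Sum>i<Suc k. ?W b i b * ?u * ?W (Suc b) (Suc k - 1 - i) g)
      = (\<Sum>i<k. ?W b i b * ?u * ?W (Suc b) (k - i) g) + ?W b k b * ?u * of_bool (g = Suc b)"
    by simp
  also have "(\<Sum>i<k. ?W b i b * ?u * ?W (Suc b) (k - i) g)
      = (\<Sum>i<k. real ((g + 1)^2) * (?W b i b * ?u * ?W (Suc b) (k - 1 - i) g)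
          + (if Suc b < g then real (g * (g + 1)) * (?W b i b * ?u * ?W (Suc b) (k - 1 - i) (g - 1)) else 0)
          + real ((g + 1) * (g + 2)) * t * (?W b i b * ?u * ?W (Suc b) (k - 1 - i) (g + 1)))"
    by (rule sum.cong[OF refl]) (simp add: step algebra_simps)
  also have "\<dots> = real ((g + 1)^2) * S g + (if Suc b < g then real (g * (g + 1)) * S (g - 1) else 0)
      + real ((g + 1) * (g + 2)) * t * S (g + 1)"
    unfolding S_def sum.distrib sum_distrib_left by (simp add: sum.If_cases if_distrib)
  finally show ?case
    using IH Suc.prems by (cases "g = Suc b") (simp_all add: algebra_simps)
qed simp

text \<open>An excursion above b starts with a level step or with an up step, after which it returns
  to b for the first time.\<close>

lemma path_weight_excursion_Suc:
  "path_weight t b (Suc m) b = mu b * path_weight t b m b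
     + lam t (Suc b) * (\<Sum>i<m. path_weight t b i b * path_weight t (Suc b) (m - 1 - i) (Suc b))"
proof -
  have "path_weight t b (Suc m) b
      = mu b * path_weight t b m b + real ((b + 1) * (b + 2)) * t * path_weight t b m (Suc b)"
    by (simp add: mu_def)
  moreover have "lam t (Suc b) = real ((b + 1) * (b + 2)) * t * real ((b + 1) * (b + 2))"
    by (simp add: lam_def power2_eq_square algebra_simps)
  ultimately show ?thesis
    unfolding path_weight_first_passage[of b "Suc b" t m, simplified] sum_distrib_left
    by (simp add: algebra_simps)
qed

definition excursions :: "real \<Rightarrow> nat \<Rightarrow> real fps" where
  "excursions t b = Abs_fps (\<lambda>n. path_weight t b n b)"

definition jdenom :: "real \<Rightarrow> nat \<Rightarrow> real fps \<Rightarrow> real fps" where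
  "jdenom t h F = 1 - fps_const (mu h) * fps_X - fps_const (lam t (Suc h)) * fps_X ^ 2 * F"

lemma jconv_Suc_eq_inverse_jdenom: "jconv t h (Suc k) = inverse (jdenom t h (jconv t (Suc h) k))"
  by (simp add: jdenom_def)

lemma excursions_mult_jdenom: "excursions t b * jdenom t b (excursions t (Suc b)) = 1"
proof (rule fps_ext)
  fix n
  let ?F = "excursions t b" and ?G = "excursions t (Suc b)"
  have "?F * jdenom t b ?G = ?F - fps_const (mu b) * (fps_X * ?F) - fps_const (lam t (Suc b)) * (fps_X ^ 2 * (?F * ?G))"
    by (simp add: jdenom_def algebra_simps)
  moreover have "(fps_X ^ 2 * (?F * ?G)) $ Suc m
      = (\<Sum>i<m. path_weight t b i b * path_weight t (Suc b) (m - 1 - i) (Suc b))" for m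
  proof (cases m)
    case (Suc p)
    have "(fps_X ^ 2 * (?F * ?G)) $ Suc m = (?F * ?G) $ p"
      using Suc by (simp add: fps_X_power_mult_nth)
    also have "\<dots> = (\<Sum>i=0..p. path_weight t b i b * path_weight t (Suc b) (p - i) (Suc b))"
      by (simp add: fps_mult_nth excursions_def)
    also have "\<dots> = (\<Sum>i<m. path_weight t b i b * path_weight t (Suc b) (m - 1 - i) (Suc b))"
      using Suc by (intro sum.cong) auto
    finally show ?thesis .
  qed (simp add: fps_X_power_mult_nth)
  ultimately show "(?F * jdenom t b ?G) $ n = 1 $ n"
    by (cases n) (simp_all add: excursions_def fps_X_mult_nth path_weight_excursion_Suc del: path_weight.simps(2))
qed

lemma excursions_eq_inverse: "excursions t b = inverse (jdenom t b (excursions t (Suc b)))"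
  using excursions_mult_jdenom[of t b] fps_inverse_unique by (metis mult.commute)

lemma fps_mult_nth_eq_0_right: "\<forall>i<M. E $ i = 0 \<Longrightarrow> n < M \<Longrightarrow> (A * E :: 'a::comm_ring_1 fps) $ n = 0"
  by (simp add: fps_mult_nth)

lemma fps_mult_nth_eq_0_left: "\<forall>i<M. E $ i = 0 \<Longrightarrow> n < M \<Longrightarrow> (E * A :: 'a::comm_ring_1 fps) $ n = 0"
  using fps_mult_nth_eq_0_right[of M E n A] by (simp add: mult.commute)

text \<open>The first M coefficients of the inverse depend only on the first M coefficients, because
  inverse Q - inverse P = inverse Q * (P - Q) * inverse P.\<close>

lemma fps_inverse_nth_eq:
  fixes P Q :: "'a::field fps"
  assumes "P $ 0 \<noteq> 0" "Q $ 0 \<noteq> 0" "\<forall>i<M. (P - Q) $ i = 0" "n < M"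
  shows "inverse P $ n = inverse Q $ n"
proof -
  have "inverse Q * (P - Q) * inverse P = inverse Q * (P * inverse P) - (inverse Q * Q) * inverse P"
    by (simp add: algebra_simps)
  also have "\<dots> = inverse Q - inverse P"
    using inverse_mult_eq_1[OF assms(2)] inverse_mult_eq_1'[OF assms(1)] by simp
  finally have "inverse Q - inverse P = inverse Q * (P - Q) * inverse P" by simp
  moreover have "\<forall>i<M. (inverse Q * (P - Q)) $ i = 0" using fps_mult_nth_eq_0_right[OF assms(3)] by blast
  then have "(inverse Q * (P - Q) * inverse P) $ n = 0" using fps_mult_nth_eq_0_left assms(4) by blast
  ultimately show ?thesis by (metis diff_eq_eq fps_sub_nth add_0)
qed

lemma jconv_nth_eq_excursions: "n < 2 * N \<Longrightarrow> jconv t b N $ n = excursions t b $ n"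
proof (induction N arbitrary: b n)
  case (Suc N)
  have "jdenom t b (jconv t (Suc b) N) - jdenom t b (excursions t (Suc b))
      = fps_const (lam t (Suc b)) * (fps_X ^ 2 * (excursions t (Suc b) - jconv t (Suc b) N))"
    by (simp add: jdenom_def algebra_simps)
  then have "\<forall>i<2 * Suc N. (jdenom t b (jconv t (Suc b) N) - jdenom t b (excursions t (Suc b))) $ i = 0"
    using Suc.IH by (auto simp: fps_X_power_mult_nth)
  then have "inverse (jdenom t b (jconv t (Suc b) N)) $ n = inverse (jdenom t b (excursions t (Suc b))) $ n"
    using Suc.prems by (intro fps_inverse_nth_eq) (simp_all add: jdenom_def)
  then show ?case using excursions_eq_inverse[of t b] by (simp only: jconv_Suc_eq_inverse_jdenom)
qed simp

lemma jconv_nth: "n < 2 * N \<Longrightarrow> jconv t 0 N $ n = path_sum t 1 n 0"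
  using jconv_nth_eq_excursions[of n N t 0] path_weight_0_eq_path_sum[of t n 0] by (simp add: excursions_def)

lemma path_sum_0_eq_gamma_sum:
  "path_sum x y n 0 = (\<Sum>j = 0..n div 2. of_nat (gamma n j) * x ^ j * y ^ (n - 2 * j))"
  unfolding path_sum_def gamma_eq_path_count diff_zero
  by (rule sum.mono_neutral_right) (auto simp: path_count_eq_0)

theorem mainTheorem1:
  shows "(\<forall>n \<ge> 1. Xpoly n =
            (\<Sum>j = 0..n div 2. of_nat (gamma n j) * monom 1 j * [:1, 1:] ^ (n - 2 * j)))
       \<and> (\<forall>t :: real. \<forall>n. \<exists>N0. \<forall>N \<ge> N0.
            fps_nth (jconv t 0 N) n = (\<Sum>j = 0..n div 2. real (gamma n j) * t ^ j))"
proof (intro conjI allI impI exI)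
  fix n :: nat
  show "Xpoly n = (\<Sum>j = 0..n div 2. of_nat (gamma n j) * monom 1 j * [:1, 1:] ^ (n - 2 * j))"
    unfolding Xpoly_eq_path_sum path_sum_0_eq_gamma_sum by (simp add: monom_power)
next
  fix t :: real and n N :: nat
  assume "Suc n \<le> N"
  then show "fps_nth (jconv t 0 N) n = (\<Sum>j = 0..n div 2. real (gamma n j) * t ^ j)"
    by (simp add: jconv_nth path_sum_0_eq_gamma_sum)
qed

end
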